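(* Let $(S,\oplus,\odot)$ be a semiring whose addition $\oplus$ is commutative (multiplication $\odot$ need not be commutative). For all positive integers $n,p,q$ with $p+q\le n$ and all maps $f:\binom{[n]}{p}\to S$, $g:\binom{[n]}{q}\to S$, the value $$\bigoplus_{X\in\binom{[n]}{p},\,Y\in\binom{[n]}{q},\,X\cap Y=\emptyset} f(X)\odot g(Y)$$ can be computed by an arithmetic circuit over $\oplus,\odot$ with $O((n^p+n^q)\log n)$ gates, where the constant in the $O$-notation does not depend on $n,p,q$.
   Context: $\binom{[n]}{p}$ denotes the family of $p$-element subsets of $[n]=\{1,\dots,n\}$. An arithmetic circuit has input gates for the values $f(X)$ and $g(Y)$ and binary gates each computing $\oplus$ or $\odot$ (with left/right order of the $\odot$ arguments specified) of its two predecessors. *)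

theory Defs
  imports Complex_Main
begin

definition subsets :: "nat \<Rightarrow> nat \<Rightarrow> nat set set" where
  "subsets n p = {X. X \<subseteq> {1..n} \<and> card X = p}"

text \<open>Sum over a finite nonempty set in a commutative additive semigroup
  (no zero element is assumed).\<close>
definition nsum :: "('b \<Rightarrow> 'a::ab_semigroup_add) \<Rightarrow> 'b set \<Rightarrow> 'a" where
  "nsum h A = the (Finite_Set.fold
      (\<lambda>x acc. Some (case acc of None \<Rightarrow> h x | Some a \<Rightarrow> h x + a)) None A)"

text \<open>Arithmetic circuits as straight-line programs: gate k is either an input
  gate for f(X) or g(Y), or a binary gate (oplus or odot) whose arguments are
  earlier gates i, j < k.
  The output is the last gate; the size is the number of gates.\<close>
datatype gate = InF "nat set" | InG "nat set" | GAdd nat nat | GMul nat nat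

fun gate_ok :: "nat \<Rightarrow> nat \<Rightarrow> nat \<Rightarrow> nat \<Rightarrow> gate \<Rightarrow> bool" where
  "gate_ok n p q k (InF X) = (X \<in> subsets n p)"
| "gate_ok n p q k (InG Y) = (Y \<in> subsets n q)"
| "gate_ok n p q k (GAdd i j) = (i < k \<and> j < k)"
| "gate_ok n p q k (GMul i j) = (i < k \<and> j < k)"

definition circuit_wf :: "nat \<Rightarrow> nat \<Rightarrow> nat \<Rightarrow> gate list \<Rightarrow> bool" where
  "circuit_wf n p q C = (C \<noteq> [] \<and> (\<forall>k < length C. gate_ok n p q k (C ! k)))"

fun gate_val :: "(nat set \<Rightarrow> 'a::semiring) \<Rightarrow> (nat set \<Rightarrow> 'a) \<Rightarrow> 'a list \<Rightarrow> gate \<Rightarrow> 'a" where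
  "gate_val f g vs (InF X) = f X"
| "gate_val f g vs (InG Y) = g Y"
| "gate_val f g vs (GAdd i j) = vs ! i + vs ! j"
| "gate_val f g vs (GMul i j) = vs ! i * vs ! j"

definition gate_values :: "(nat set \<Rightarrow> 'a::semiring) \<Rightarrow> (nat set \<Rightarrow> 'a) \<Rightarrow> gate list \<Rightarrow> 'a list" where
  "gate_values f g C = foldl (\<lambda>vs gt. vs @ [gate_val f g vs gt]) [] C"

definition circuit_value :: "(nat set \<Rightarrow> 'a::semiring) \<Rightarrow> (nat set \<Rightarrow> 'a) \<Rightarrow> gate list \<Rightarrow> 'a" where
  "circuit_value f g C = last (gate_values f g C)"

end

theory Submission
  imports Defs
begin

text \<open>For fixed Y the inner sum is the sum of f X over the p-sets X with X \<inter> Y = {}. For a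
  union R of dyadic blocks of [n] and W \<subseteq> R, the trace sums \<Sum>{f X | X \<inter> R = W} are obtained
  from those of the union of the parent blocks by summing out the new points one at a time; at the
  root, R = [n], they are the inputs f W. Equal subexpressions are shared among all Y, so the
  circuit size is the number of distinct subexpressions. At level l such a node is determined by a
  set of k \<le> q blocks of size 2^l, a position among the at most 2k 2^l new points, and a set of
  j < p points of the parent region, roughly binom(n/2^l, k) (2k 2^l) binom(2k 2^l, j) choices.
  Because of the factorials in k! j! this sums to O(n^p + n^q) per level with a constant
  independent of p and q, and there are O(log n) levels.\<close>

definition nsum_step :: "('b \<Rightarrow> 'a::ab_semigroup_add) \<Rightarrow> 'b \<Rightarrow> 'a option \<Rightarrow> 'a option" where
  "nsum_step h x acc = Some (case acc of None \<Rightarrow> h x | Some a \<Rightarrow> h x + a)"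

lemma nsum_eq_fold: "nsum h A = the (Finite_Set.fold (nsum_step h) None A)"
  unfolding nsum_def nsum_step_def ..

lemma comp_fun_commute_nsum_step: "comp_fun_commute (nsum_step h)"
  by unfold_locales (simp add: fun_eq_iff nsum_step_def add_ac split: option.split)

lemma fold_nsum_step_insert:
  "finite A \<Longrightarrow> x \<notin> A \<Longrightarrow>
    Finite_Set.fold (nsum_step h) z (insert x A) = nsum_step h x (Finite_Set.fold (nsum_step h) z A)"
  using comp_fun_commute_on.fold_insert[of UNIV "nsum_step h" x A z]
    comp_fun_commute_nsum_step comp_fun_commute_def' by blast

lemma fold_nsum_step:
  "finite A \<Longrightarrow> Finite_Set.fold (nsum_step h) None A = (if A = {} then None else Some (nsum h A))"
proof (induction A rule: finite_induct)
  case (insert x F)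
  then have "Finite_Set.fold (nsum_step h) None (insert x F) \<noteq> None"
    by (simp add: fold_nsum_step_insert nsum_step_def)
  then show ?case
    by (auto simp: nsum_eq_fold)
qed simp

lemma nsum_insert:
  assumes "finite A" "x \<notin> A" "A \<noteq> {}"
  shows "nsum h (insert x A) = h x + nsum h A"
proof -
  have "Finite_Set.fold (nsum_step h) None (insert x A) = nsum_step h x (Some (nsum h A))"
    using assms by (simp add: fold_nsum_step_insert fold_nsum_step)
  then show ?thesis
    by (simp add: nsum_eq_fold[of h "insert x A"] nsum_step_def)
qed

lemma nsum_singleton [simp]: "nsum h {x} = h x"
  using fold_nsum_step_insert[of "{}" x h None] by (simp add: nsum_eq_fold nsum_step_def)

lemma nsum_Un_disjoint:
  assumes "finite A" "A \<noteq> {}" "finite B" "B \<noteq> {}" "A \<inter> B = {}"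
  shows "nsum h (A \<union> B) = nsum h A + nsum h B"
  using assms(3-)
proof (induction B rule: finite_ne_induct)
  case (singleton x)
  then show ?case using assms(1,2) by (simp add: nsum_insert add.commute)
next
  case (insert x F)
  then have "nsum h (A \<union> insert x F) = h x + nsum h (A \<union> F)"
    using assms(1) nsum_insert[of "A \<union> F" x h] by auto
  then show ?case using insert by (simp add: nsum_insert add_ac)
qed

lemma nsum_cong: "finite A \<Longrightarrow> (\<And>x. x \<in> A \<Longrightarrow> h x = k x) \<Longrightarrow> nsum h A = nsum k A"
proof (induction A rule: finite_induct)
  case (insert x F)
  then show ?case by (cases "F = {}") (auto simp: nsum_insert)
qed (simp add: nsum_def)

lemma nsum_reindex: "finite A \<Longrightarrow> inj_on \<phi> A \<Longrightarrow> nsum h (\<phi> ` A) = nsum (h \<circ> \<phi>) A"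
proof (induction A rule: finite_induct)
  case (insert x F)
  then show ?case by (cases "F = {}") (auto simp: nsum_insert)
qed (simp add: nsum_def)

lemma nsum_distrib_right:
  "finite A \<Longrightarrow> A \<noteq> {} \<Longrightarrow> nsum h A * (c::'a::semiring) = nsum (\<lambda>x. h x * c) A"
  by (induction A rule: finite_ne_induct) (simp_all add: nsum_insert distrib_right)

lemma nsum_UN_disjoint:
  assumes "finite I" "I \<noteq> {}" "\<And>i. i \<in> I \<Longrightarrow> finite (A i) \<and> A i \<noteq> {}"
    and "\<And>i j. i \<in> I \<Longrightarrow> j \<in> I \<Longrightarrow> i \<noteq> j \<Longrightarrow> A i \<inter> A j = {}"
  shows "nsum h (\<Union>i\<in>I. A i) = nsum (\<lambda>i. nsum h (A i)) I"
  using assms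
proof (induction I rule: finite_ne_induct)
  case (insert x F)
  have "(\<Union>i\<in>insert x F. A i) = A x \<union> (\<Union>i\<in>F. A i)" by auto
  moreover have "A x \<inter> (\<Union>i\<in>F. A i) = {}" using insert.prems(2) insert.hyps by fastforce
  ultimately have "nsum h (\<Union>i\<in>insert x F. A i) = nsum h (A x) + nsum h (\<Union>i\<in>F. A i)"
    using insert by (simp add: nsum_Un_disjoint)
  then show ?case using insert by (simp add: nsum_insert)
qed simp

datatype expr = EF "nat set" | EG "nat set" | EAdd expr expr | EMul expr expr

fun eval :: "(nat set \<Rightarrow> 'a::semiring) \<Rightarrow> (nat set \<Rightarrow> 'a) \<Rightarrow> expr \<Rightarrow> 'a" where
  "eval f g (EF X) = f X"
| "eval f g (EG Y) = g Y"
| "eval f g (EAdd a b) = eval f g a + eval f g b"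
| "eval f g (EMul a b) = eval f g a * eval f g b"

text \<open>Equal subexpressions become one gate, so the circuit size of an expression is the number
  of its distinct subexpressions.\<close>
fun subexprs :: "expr \<Rightarrow> expr set" where
  "subexprs (EF X) = {EF X}"
| "subexprs (EG Y) = {EG Y}"
| "subexprs (EAdd a b) = insert (EAdd a b) (subexprs a \<union> subexprs b)"
| "subexprs (EMul a b) = insert (EMul a b) (subexprs a \<union> subexprs b)"

fun children :: "expr \<Rightarrow> expr set" where
  "children (EAdd a b) = {a, b}"
| "children (EMul a b) = {a, b}"
| "children _ = {}"

lemma subexprs_refl: "e \<in> subexprs e"
  by (cases e) auto

lemma finite_subexprs: "finite (subexprs e)"
  by (induction e) auto

lemma size_subexpr_le: "x \<in> subexprs e \<Longrightarrow> size x \<le> size e"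
  by (induction e) auto

lemma subexprs_trans: "x \<in> subexprs e \<Longrightarrow> subexprs x \<subseteq> subexprs e"
  by (induction e) auto

lemma size_child_less: "c \<in> children e \<Longrightarrow> size c < size e"
  by (cases e) auto

lemma child_in_subexprs: "e \<in> subexprs t \<Longrightarrow> c \<in> children e \<Longrightarrow> c \<in> subexprs t"
  using subexprs_trans[of e t] by (cases e) (auto simp: subexprs_refl)

lemma sorted_key_less_in_take:
  assumes "sorted (map f xs)" "k < length xs" "c \<in> set xs" "f c < f (xs ! k)"
  shows "c \<in> set (take k xs)"
proof -
  obtain i where i: "i < length xs" "xs ! i = c"
    using assms(3) by (auto simp: in_set_conv_nth)
  have "i < k"
    using sorted_nth_mono[OF assms(1), of k i] assms(2,4) i by (cases "k \<le> i") auto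
  then show ?thesis
    using i by (auto simp: in_set_conv_nth intro!: exI[of _ i])
qed

text \<open>Sorting by size lists every expression after its children.\<close>
lemma subexprs_topological_order:
  obtains xs where "distinct xs" "set xs = subexprs t" "last xs = t"
    "\<And>k c. k < length xs \<Longrightarrow> c \<in> children (xs ! k) \<Longrightarrow> c \<in> set (take k xs)"
proof -
  obtain ys0 where ys0: "distinct ys0" "set ys0 = subexprs t - {t}"
    using finite_distinct_list[of "subexprs t - {t}"] finite_subexprs by auto
  define xs where "xs = sort_key size ys0 @ [t]"
  have set_xs: "set xs = subexprs t"
    using ys0 subexprs_refl[of t] unfolding xs_def by auto
  have "sorted (map size xs)"
    using ys0 size_subexpr_le unfolding xs_def by (auto simp: sorted_append)
  then have "c \<in> set (take k xs)" if "k < length xs" "c \<in> children (xs ! k)" for k c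
    using that set_xs size_child_less child_in_subexprs nth_mem
    by (intro sorted_key_less_in_take) blast+
  moreover have "distinct xs" "last xs = t"
    using ys0 unfolding xs_def by auto
  ultimately show thesis
    using that set_xs by blast
qed

definition position :: "'b list \<Rightarrow> 'b \<Rightarrow> nat" where
  "position xs a = (LEAST i. i < length xs \<and> xs ! i = a)"

lemma position_in_take:
  assumes "a \<in> set (take k xs)"
  shows "position xs a < k" "xs ! position xs a = a"
proof -
  obtain i where i: "i < k" "i < length xs" "xs ! i = a"
    using assms by (auto simp: in_set_conv_nth)
  have "position xs a \<le> i"
    unfolding position_def using i by (intro Least_le) auto
  then show "position xs a < k"
    using i by simp
  show "xs ! position xs a = a"
    unfolding position_def using LeastI[of "\<lambda>i. i < length xs \<and> xs ! i = a" i] i by auto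
qed

fun gate_of_expr :: "expr list \<Rightarrow> expr \<Rightarrow> gate" where
  "gate_of_expr xs (EF X) = InF X"
| "gate_of_expr xs (EG Y) = InG Y"
| "gate_of_expr xs (EAdd a b) = GAdd (position xs a) (position xs b)"
| "gate_of_expr xs (EMul a b) = GMul (position xs a) (position xs b)"

lemma gate_values_snoc:
  "gate_values f g (C @ [gt]) = gate_values f g C @ [gate_val f g (gate_values f g C) gt]"
  by (simp add: gate_values_def)

lemma gate_values_of_exprs:
  assumes "\<And>k c. k < length xs \<Longrightarrow> c \<in> children (xs ! k) \<Longrightarrow> c \<in> set (take k xs)"
  shows "k \<le> length xs \<Longrightarrow>
    gate_values f g (map (gate_of_expr xs) (take k xs)) = map (eval f g) (take k xs)"
proof (induction k)
  case 0
  then show ?case by (simp add: gate_values_def)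
next
  case (Suc k)
  have "map (eval f g) (take k xs) ! position xs c = eval f g c" if "c \<in> children (xs ! k)" for c
    using assms[of k c] position_in_take[of c k xs] Suc.prems that by simp
  then have "gate_val f g (map (eval f g) (take k xs)) (gate_of_expr xs (xs ! k)) = eval f g (xs ! k)"
    by (cases "xs ! k") auto
  then show ?case
    using Suc by (simp add: take_Suc_conv_app_nth gate_values_snoc)
qed

lemma circuit_of_expr:
  assumes "\<And>X. EF X \<in> subexprs t \<Longrightarrow> X \<in> subsets n p"
    and "\<And>Y. EG Y \<in> subexprs t \<Longrightarrow> Y \<in> subsets n q"
  obtains C where "circuit_wf n p q C" "length C = card (subexprs t)"
    "\<And>f g. circuit_value f g C = eval f g t"
proof -
  obtain xs where xs: "distinct xs" "set xs = subexprs t" "last xs = t"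
    and children_first: "\<And>k c. k < length xs \<Longrightarrow> c \<in> children (xs ! k) \<Longrightarrow> c \<in> set (take k xs)"
    using subexprs_topological_order by blast
  define C where "C = map (gate_of_expr xs) xs"
  have "xs \<noteq> []"
    using xs(2) subexprs_refl[of t] by auto
  have "gate_ok n p q k (C ! k)" if "k < length C" for k
    using that assms xs(2) nth_mem[of k xs] children_first[of k] position_in_take[of _ k xs]
    unfolding C_def by (cases "xs ! k") auto
  then have "circuit_wf n p q C"
    using \<open>xs \<noteq> []\<close> unfolding circuit_wf_def C_def by auto
  moreover have "length C = card (subexprs t)"
    using xs(1,2) distinct_card unfolding C_def by fastforce
  moreover have "circuit_value f g C = eval f g t" for f g
    using gate_values_of_exprs[OF children_first order_refl, of f g] xs(3) \<open>xs \<noteq> []\<close>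
    unfolding C_def circuit_value_def by (simp add: last_map)
  ultimately show thesis
    using that by blast
qed

lemma finite_subsets [simp]: "finite (subsets n p)"
  unfolding subsets_def by (rule finite_subset[of _ "Pow {1..n}"]) auto

lemma card_subsets: "card (subsets n p) = n choose p"
  unfolding subsets_def using n_subsets[of "{1..n}" p] by simp

lemma subsets_nonempty: "p \<le> n \<Longrightarrow> subsets n p \<noteq> {}"
  using obtain_subset_with_card_n[of p "{1..n}"] unfolding subsets_def by auto

definition trace_class :: "nat \<Rightarrow> nat \<Rightarrow> nat set \<Rightarrow> nat set \<Rightarrow> nat set set" where
  "trace_class n p R W = {X \<in> subsets n p. X \<inter> R = W}"

definition trace_sum :: "nat \<Rightarrow> nat \<Rightarrow> (nat set \<Rightarrow> 'a::semiring) \<Rightarrow> nat set \<Rightarrow> nat set \<Rightarrow> 'a" where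
  "trace_sum n p f R W = nsum f (trace_class n p R W)"

lemma finite_trace_class [simp]: "finite (trace_class n p R W)"
  unfolding trace_class_def by simp

lemma trace_class_nonempty_iff:
  assumes "R \<subseteq> {1..n}" "W \<subseteq> R"
  shows "trace_class n p R W \<noteq> {} \<longleftrightarrow> card W \<le> p \<and> p - card W \<le> n - card R"
proof
  assume "trace_class n p R W \<noteq> {}"
  then obtain X where X: "X \<subseteq> {1..n}" "card X = p" "X \<inter> R = W"
    unfolding trace_class_def subsets_def by auto
  have "finite X"
    using X(1) finite_subset by blast
  have "X = W \<union> (X - R)" "W \<inter> (X - R) = {}"
    using X(3) by auto
  then have "card X = card W + card (X - R)"
    using \<open>finite X\<close> by (metis card_Un_disjoint finite_Un)
  moreover have "card (X - R) \<le> n - card R"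
    using card_mono[of "{1..n} - R" "X - R"] X(1) assms(1)
    by (auto simp: card_Diff_subset finite_subset)
  ultimately show "card W \<le> p \<and> p - card W \<le> n - card R"
    using X(2) by linarith
next
  assume card_W: "card W \<le> p \<and> p - card W \<le> n - card R"
  have "finite R"
    using assms(1) finite_subset by blast
  then have "card ({1..n} - R) = n - card R"
    using assms(1) by (simp add: card_Diff_subset)
  then obtain E where E: "E \<subseteq> {1..n} - R" "card E = p - card W"
    using obtain_subset_with_card_n[of "p - card W" "{1..n} - R"] card_W by auto
  have "card (W \<union> E) = p"
    using E card_W assms \<open>finite R\<close> by (subst card_Un_disjoint) (auto dest: finite_subset)
  moreover have "W \<union> E \<subseteq> {1..n}" "(W \<union> E) \<inter> R = W"
    using E(1) assms by auto
  ultimately show "trace_class n p R W \<noteq> {}"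
    unfolding trace_class_def subsets_def by blast
qed

lemma trace_class_remove:
  assumes "e \<in> R" "e \<notin> W"
  shows "trace_class n p (R - {e}) W = trace_class n p R W \<union> trace_class n p R (insert e W)"
    and "trace_class n p R W \<inter> trace_class n p R (insert e W) = {}"
  using assms unfolding trace_class_def by auto

lemma trace_sum_remove:
  assumes R: "R \<subseteq> {1..n}" and e: "e \<in> R" and W: "W \<subseteq> R - {e}"
  shows "trace_sum n p f (R - {e}) W =
    (if p \<le> card W then trace_sum n p f R W
     else if \<not> p - card W \<le> n - card R then trace_sum n p f R (insert e W)
     else trace_sum n p f R W + trace_sum n p f R (insert e W))"
proof -
  have "e \<notin> W"
    using W by auto
  note split = trace_class_remove[OF e this]
  have "finite W"
    using W R finite_subset by (metis Diff_subset finite_atLeastAtMost subset_trans)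
  then have card_insert: "card (insert e W) = Suc (card W)"
    using \<open>e \<notin> W\<close> by simp
  note nonempty_iff = trace_class_nonempty_iff[OF R]
  show ?thesis
  proof (cases "p \<le> card W")
    case True
    then have "trace_class n p R (insert e W) = {}"
      using nonempty_iff[of "insert e W" p] e W card_insert by auto
    then show ?thesis
      using True split(1) unfolding trace_sum_def by simp
  next
    case False
    show ?thesis
    proof (cases "p - card W \<le> n - card R")
      case True
      moreover have "card (insert e W) \<le> p" "p - card (insert e W) \<le> n - card R"
        using False True card_insert by auto
      ultimately have "trace_class n p R W \<noteq> {}" "trace_class n p R (insert e W) \<noteq> {}"
        using False nonempty_iff[of W p] nonempty_iff[of "insert e W" p] e W by auto
      then show ?thesis
        using False True split unfolding trace_sum_def by (simp add: nsum_Un_disjoint)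
    next
      case False': False
      then have "trace_class n p R W = {}"
        using nonempty_iff[of W p] W by auto
      then show ?thesis
        using False False' split(1) unfolding trace_sum_def by simp
    qed
  qed
qed

text \<open>Sums out the points es one at a time, each either joining W or not. Branches whose trace
  class is empty are skipped, since circuits have no constant gates.\<close>
fun marginal_expr :: "nat \<Rightarrow> nat \<Rightarrow> (nat set \<Rightarrow> expr) \<Rightarrow> nat list \<Rightarrow> nat set \<Rightarrow> expr" where
  "marginal_expr p c base [] W = base W"
| "marginal_expr p c base (e # es) W =
     (if p \<le> card W then marginal_expr p c base es W
      else if \<not> p - card W \<le> c + length es then marginal_expr p c base es (insert e W)
      else EAdd (marginal_expr p c base es W) (marginal_expr p c base es (insert e W)))"

lemma eval_marginal_expr:
  assumes R0: "R0 \<subseteq> {1..n}" and c: "c = n - card R0"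
    and base: "\<And>W. W \<subseteq> R0 \<Longrightarrow> card W \<le> p \<Longrightarrow> p - card W \<le> c \<Longrightarrow>
      eval f g (base W) = trace_sum n p f R0 W"
  shows "distinct es \<Longrightarrow> set es \<subseteq> R0 \<Longrightarrow> W \<subseteq> R0 - set es \<Longrightarrow> card W \<le> p \<Longrightarrow>
    p - card W \<le> c + length es \<Longrightarrow>
    eval f g (marginal_expr p c base es W) = trace_sum n p f (R0 - set es) W"
proof (induction es arbitrary: W)
  case Nil
  then show ?case using base by simp
next
  case (Cons e es)
  define R where "R = R0 - set es"
  have "finite R0"
    using R0 finite_subset by blast
  have "card R0 \<le> n"
    using card_mono[OF _ R0] by simp
  moreover have "card R = card R0 - length es" "length es \<le> card R0"
    unfolding R_def using Cons.prems(1,2) \<open>finite R0\<close> distinct_card[of es] card_mono[of R0 "set es"]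
    by (auto simp: card_Diff_subset)
  ultimately have n_minus_R: "n - card R = c + length es"
    using c by linarith
  have "R \<subseteq> {1..n}" "e \<in> R" "W \<subseteq> R - {e}" "R0 - set (e # es) = R - {e}"
    using R0 Cons.prems unfolding R_def by auto
  then have step: "trace_sum n p f (R0 - set (e # es)) W =
    (if p \<le> card W then trace_sum n p f R W
     else if \<not> p - card W \<le> c + length es then trace_sum n p f R (insert e W)
     else trace_sum n p f R W + trace_sum n p f R (insert e W))"
    using trace_sum_remove[of R n e W p f] unfolding n_minus_R by simp
  have IH_W: "eval f g (marginal_expr p c base es W) = trace_sum n p f R W"
    if "p - card W \<le> c + length es"
    using Cons.IH[of W] Cons.prems that unfolding R_def by auto
  have "finite W"
    using Cons.prems(3) \<open>finite R0\<close> finite_subset by blast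
  moreover have "e \<notin> W"
    using Cons.prems(3) by auto
  ultimately have "card (insert e W) = Suc (card W)"
    by simp
  have IH_eW: "eval f g (marginal_expr p c base es (insert e W)) = trace_sum n p f R (insert e W)"
    if "\<not> p \<le> card W"
    unfolding R_def by (rule Cons.IH) (use Cons.prems that \<open>card (insert e W) = _\<close> in auto)
  show ?case
    using step IH_W IH_eW by simp
qed

text \<open>Block d at level l is the interval {d * 2^l + 1 .. (d + 1) * 2^l}; a set D of block
  indices stands for the union of its blocks within {1..n}.\<close>
definition block_union :: "nat \<Rightarrow> nat \<Rightarrow> nat set \<Rightarrow> nat set" where
  "block_union n l D = {x \<in> {1..n}. (x - 1) div 2 ^ l \<in> D}"

definition parent_blocks :: "nat set \<Rightarrow> nat set" where
  "parent_blocks D = (\<lambda>d. d div 2) ` D"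

definition valid_blocks :: "nat \<Rightarrow> nat \<Rightarrow> nat set \<Rightarrow> bool" where
  "valid_blocks n l D \<longleftrightarrow> D \<noteq> {} \<and> (\<forall>d\<in>D. d * 2 ^ l < n)"

definition new_points :: "nat \<Rightarrow> nat \<Rightarrow> nat set \<Rightarrow> nat list" where
  "new_points n l D = sorted_list_of_set (block_union n (Suc l) (parent_blocks D) - block_union n l D)"

lemma block_union_subset: "block_union n l D \<subseteq> {1..n}"
  unfolding block_union_def by auto

lemma finite_block_union [simp]: "finite (block_union n l D)"
  by (rule finite_subset[OF block_union_subset]) simp

lemma card_block_union_le: "card (block_union n l D) \<le> n"
  using card_mono[OF _ block_union_subset] by simp

lemma block_union_subset_parent: "block_union n l D \<subseteq> block_union n (Suc l) (parent_blocks D)"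
proof
  fix x assume "x \<in> block_union n l D"
  moreover have "(x - 1) div 2 ^ Suc l = ((x - 1) div 2 ^ l) div 2"
    by (metis div_mult2_eq power_Suc2)
  ultimately show "x \<in> block_union n (Suc l) (parent_blocks D)"
    unfolding block_union_def parent_blocks_def by auto
qed

lemma set_new_points:
  "set (new_points n l D) = block_union n (Suc l) (parent_blocks D) - block_union n l D"
  "distinct (new_points n l D)"
  unfolding new_points_def by auto

lemma length_new_points:
  "length (new_points n l D) = card (block_union n (Suc l) (parent_blocks D)) - card (block_union n l D)"
  using set_new_points[of n l D] distinct_card[of "new_points n l D"]
    card_Diff_subset[OF finite_block_union block_union_subset_parent] by simp

lemma valid_blocks_parent: "valid_blocks n l D \<Longrightarrow> valid_blocks n (Suc l) (parent_blocks D)"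
proof -
  assume valid: "valid_blocks n l D"
  have "d div 2 * 2 ^ Suc l < n" if "d \<in> D" for d
  proof -
    have "d div 2 * 2 ^ Suc l = (d div 2 * 2) * 2 ^ l"
      by (simp add: mult_ac)
    also have "\<dots> \<le> d * 2 ^ l"
      by (intro mult_right_mono) auto
    also have "\<dots> < n"
      using valid that unfolding valid_blocks_def by blast
    finally show ?thesis .
  qed
  then show ?thesis
    using valid unfolding valid_blocks_def parent_blocks_def by auto
qed

lemma valid_blocks_subset:
  assumes "valid_blocks n l D"
  shows "D \<subseteq> {..<n}"
proof
  fix d assume "d \<in> D"
  have "d \<le> d * 2 ^ l"
    by simp
  also have "\<dots> < n"
    using assms \<open>d \<in> D\<close> unfolding valid_blocks_def by blast
  finally show "d \<in> {..<n}"
    by simp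
qed

lemma block_union_top:
  assumes "n \<le> 2 ^ L" "valid_blocks n L D"
  shows "block_union n L D = {1..n}"
proof -
  obtain d where "d \<in> D" "d * 2 ^ L < n"
    using assms(2) unfolding valid_blocks_def by auto
  then have "0 \<in> D"
    using assms(1) by (cases d) auto
  moreover have "(x - 1) div 2 ^ L = 0" if "x \<in> {1..n}" for x
    using that assms(1) by auto
  ultimately show ?thesis
    unfolding block_union_def by auto
qed

text \<open>D is a set of blocks at level L - r, so r counts the levels below the top level L, at which
  a single block covers {1..n}.\<close>
fun trace_expr :: "nat \<Rightarrow> nat \<Rightarrow> nat \<Rightarrow> nat \<Rightarrow> nat set \<Rightarrow> nat set \<Rightarrow> expr" where
  "trace_expr n p L 0 D W = EF W"
| "trace_expr n p L (Suc r) D W =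
     marginal_expr p (n - card (block_union n (L - r) (parent_blocks D)))
       (trace_expr n p L r (parent_blocks D)) (new_points n (L - Suc r) D) W"

lemma eval_trace_expr:
  assumes "n \<le> 2 ^ L"
  shows "r \<le> L \<Longrightarrow> valid_blocks n (L - r) D \<Longrightarrow> W \<subseteq> block_union n (L - r) D \<Longrightarrow> card W \<le> p \<Longrightarrow>
    p - card W \<le> n - card (block_union n (L - r) D) \<Longrightarrow>
    eval f g (trace_expr n p L r D W) = trace_sum n p f (block_union n (L - r) D) W"
proof (induction r arbitrary: D W)
  case 0
  then have "block_union n L D = {1..n}" "card W = p"
    using block_union_top assms by auto
  then have "trace_class n p (block_union n L D) W = {W}"
    using 0 unfolding trace_class_def subsets_def by auto
  then show ?case
    unfolding trace_sum_def by simp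
next
  case (Suc r)
  define l where "l = L - Suc r"
  have L_minus_r: "L - r = Suc l"
    using Suc.prems(1) unfolding l_def by simp
  define R0 where "R0 = block_union n (Suc l) (parent_blocks D)"
  have "valid_blocks n (L - r) (parent_blocks D)"
    using valid_blocks_parent Suc.prems(2) unfolding L_minus_r l_def by simp
  then have base: "eval f g (trace_expr n p L r (parent_blocks D) W') = trace_sum n p f R0 W'"
    if "W' \<subseteq> R0" "card W' \<le> p" "p - card W' \<le> n - card R0" for W'
    using Suc.IH Suc.prems(1) that unfolding R0_def L_minus_r by simp
  have R0_minus: "R0 - set (new_points n l D) = block_union n l D"
    using set_new_points block_union_subset_parent unfolding R0_def by blast
  have "eval f g (marginal_expr p (n - card R0) (trace_expr n p L r (parent_blocks D))
      (new_points n l D) W) = trace_sum n p f (R0 - set (new_points n l D)) W"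
    by (rule eval_marginal_expr[OF _ refl base])
      (use block_union_subset set_new_points Suc.prems R0_minus length_new_points card_block_union_le
        card_mono[OF finite_block_union block_union_subset_parent]
        in \<open>auto simp: R0_def l_def\<close>)
  then show ?case
    using R0_minus L_minus_r unfolding R0_def l_def by simp
qed

text \<open>The value on the empty list is junk; it is only used on nonempty lists.\<close>
fun sum_expr :: "('b \<Rightarrow> expr) \<Rightarrow> 'b list \<Rightarrow> expr" where
  "sum_expr h [] = EF {}"
| "sum_expr h [y] = h y"
| "sum_expr h (y # z # ys) = EAdd (h y) (sum_expr h (z # ys))"

lemma eval_sum_expr:
  "distinct ys \<Longrightarrow> ys \<noteq> [] \<Longrightarrow> eval f g (sum_expr h ys) = nsum (\<lambda>y. eval f g (h y)) (set ys)"
  by (induction h ys rule: sum_expr.induct) (auto simp: nsum_insert)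

definition leaf_blocks :: "nat set \<Rightarrow> nat set" where
  "leaf_blocks Y = (\<lambda>x. x - 1) ` Y"

lemma block_union_leaf_blocks:
  assumes "Y \<subseteq> {1..n}"
  shows "block_union n 0 (leaf_blocks Y) = Y"
proof -
  have "x = y" if "x \<in> {1..n}" "y \<in> Y" "x - 1 = y - 1" for x y
    using that assms by (auto simp: subset_iff)
  then show ?thesis
    using assms unfolding block_union_def leaf_blocks_def by auto
qed

lemma valid_blocks_leaf_blocks: "Y \<subseteq> {1..n} \<Longrightarrow> Y \<noteq> {} \<Longrightarrow> valid_blocks n 0 (leaf_blocks Y)"
  unfolding valid_blocks_def leaf_blocks_def by fastforce

definition disjoint_sum_expr :: "nat \<Rightarrow> nat \<Rightarrow> nat \<Rightarrow> nat set \<Rightarrow> expr" where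
  "disjoint_sum_expr n p L Y = EMul (trace_expr n p L L (leaf_blocks Y) {}) (EG Y)"

lemma eval_disjoint_sum_expr:
  assumes "n \<le> 2 ^ L" "Y \<in> subsets n q" "p + q \<le> n" "0 < q"
  shows "eval f g (disjoint_sum_expr n p L Y) = nsum (\<lambda>X. f X * g Y) (trace_class n p Y {})"
proof -
  have Y: "Y \<subseteq> {1..n}" "card Y = q" "Y \<noteq> {}"
    using assms(2,4) unfolding subsets_def by auto
  have "eval f g (trace_expr n p L L (leaf_blocks Y) {}) = trace_sum n p f Y {}"
    using eval_trace_expr[OF assms(1), of L "leaf_blocks Y" "{}" p f g] assms(3)
      valid_blocks_leaf_blocks[OF Y(1,3)] block_union_leaf_blocks[OF Y(1)] Y by simp
  moreover have "trace_class n p Y {} \<noteq> {}"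
    using trace_class_nonempty_iff[OF Y(1), of "{}" p] assms(3) Y(2) by simp
  ultimately show ?thesis
    unfolding disjoint_sum_expr_def trace_sum_def by (simp add: nsum_distrib_right)
qed

lemma nsum_pairs:
  assumes "finite B" "B \<noteq> {}" "\<And>y. y \<in> B \<Longrightarrow> finite (A y) \<and> A y \<noteq> {}"
  shows "nsum h {(x, y). y \<in> B \<and> x \<in> A y} = nsum (\<lambda>y. nsum (\<lambda>x. h (x, y)) (A y)) B"
proof -
  have "{(x, y). y \<in> B \<and> x \<in> A y} = (\<Union>y\<in>B. (\<lambda>x. (x, y)) ` A y)"
    by auto
  then have "nsum h {(x, y). y \<in> B \<and> x \<in> A y} = nsum (\<lambda>y. nsum h ((\<lambda>x. (x, y)) ` A y)) B"
    by (simp only:) (rule nsum_UN_disjoint; use assms in auto)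
  also have "\<dots> = nsum (\<lambda>y. nsum (\<lambda>x. h (x, y)) (A y)) B"
    using assms by (intro nsum_cong) (auto simp: nsum_reindex inj_on_def comp_def)
  finally show ?thesis .
qed

definition pairs_expr :: "nat \<Rightarrow> nat \<Rightarrow> nat \<Rightarrow> nat set list \<Rightarrow> expr" where
  "pairs_expr n p L ys = sum_expr (disjoint_sum_expr n p L) ys"

lemma eval_pairs_expr:
  assumes "n \<le> 2 ^ L" "p + q \<le> n" "0 < q" "distinct ys" "set ys = subsets n q"
  shows "eval f g (pairs_expr n p L ys) =
    nsum (\<lambda>(X, Y). f X * g Y) {(X, Y). X \<in> subsets n p \<and> Y \<in> subsets n q \<and> X \<inter> Y = {}}"
proof -
  have "subsets n q \<noteq> {}"
    using subsets_nonempty assms(2) by simp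
  have nonempty: "trace_class n p Y {} \<noteq> {}" if "Y \<in> subsets n q" for Y
    using that trace_class_nonempty_iff[of Y n "{}" p] assms(2) unfolding subsets_def by auto
  have "{(X, Y). X \<in> subsets n p \<and> Y \<in> subsets n q \<and> X \<inter> Y = {}} =
      {(X, Y). Y \<in> subsets n q \<and> X \<in> trace_class n p Y {}}"
    unfolding trace_class_def by auto
  then have "nsum (\<lambda>(X, Y). f X * g Y) {(X, Y). X \<in> subsets n p \<and> Y \<in> subsets n q \<and> X \<inter> Y = {}} =
      nsum (\<lambda>Y. nsum (\<lambda>X. f X * g Y) (trace_class n p Y {})) (subsets n q)"
    using nsum_pairs[of "subsets n q" "\<lambda>Y. trace_class n p Y {}" "\<lambda>(X, Y). f X * g Y"] nonempty \<open>subsets n q \<noteq> {}\<close> by simp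
  also have "\<dots> = nsum (\<lambda>Y. eval f g (disjoint_sum_expr n p L Y)) (subsets n q)"
    by (intro nsum_cong) (simp_all add: eval_disjoint_sum_expr[OF assms(1) _ assms(2,3)])
  also have "\<dots> = eval f g (pairs_expr n p L ys)"
    using eval_sum_expr[OF assms(4), of f g] assms(5) \<open>subsets n q \<noteq> {}\<close>
    unfolding pairs_expr_def by (cases "ys = []") auto
  finally show ?thesis ..
qed

definition marginal_nodes :: "nat \<Rightarrow> nat \<Rightarrow> (nat set \<Rightarrow> expr) \<Rightarrow> nat list \<Rightarrow> nat set \<Rightarrow> expr set" where
  "marginal_nodes p c base es S = {t. \<exists>i W. i \<le> length es \<and> W \<subseteq> S \<and> card W < p \<and>
     t = marginal_expr p c base (drop i es) W \<and> (\<exists>a b. t = EAdd a b)}"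

lemma marginal_nodes_Cons_mono:
  assumes "S \<subseteq> S'"
  shows "marginal_nodes p c base es S \<subseteq> marginal_nodes p c base (e # es) S'"
proof
  fix t assume "t \<in> marginal_nodes p c base es S"
  then obtain i W where "i \<le> length es" "W \<subseteq> S" "card W < p"
    "t = marginal_expr p c base (drop i es) W" "\<exists>a b. t = EAdd a b"
    unfolding marginal_nodes_def by blast
  then show "t \<in> marginal_nodes p c base (e # es) S'"
    using assms unfolding marginal_nodes_def by (intro CollectI exI[of _ "Suc i"] exI[of _ W]) auto
qed

lemma marginal_nodes_mono: "S \<subseteq> S' \<Longrightarrow> marginal_nodes p c base es S \<subseteq> marginal_nodes p c base es S'"
  unfolding marginal_nodes_def by (intro Collect_mono ex_mono conj_mono) auto

definition base_subexprs :: "nat \<Rightarrow> nat \<Rightarrow> (nat set \<Rightarrow> expr) \<Rightarrow> nat set \<Rightarrow> expr set" where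
  "base_subexprs p c base S = (\<Union>W\<in>{W. W \<subseteq> S \<and> card W \<le> p \<and> p - card W \<le> c}. subexprs (base W))"

lemma base_subexprs_mono: "S \<subseteq> S' \<Longrightarrow> base_subexprs p c base S \<subseteq> base_subexprs p c base S'"
  unfolding base_subexprs_def by (rule UN_mono) auto

lemma subexprs_marginal_expr:
  "distinct es \<Longrightarrow> W \<inter> set es = {} \<Longrightarrow> finite W \<Longrightarrow> card W \<le> p \<Longrightarrow> p - card W \<le> c + length es \<Longrightarrow>
   subexprs (marginal_expr p c base es W) \<subseteq>
     marginal_nodes p c base es (W \<union> set es) \<union> base_subexprs p c base (W \<union> set es)"
proof (induction es arbitrary: W)
  case Nil
  then have "subexprs (base W) \<subseteq> base_subexprs p c base W"
    unfolding base_subexprs_def by (intro UN_upper) simp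
  then show ?case
    by auto
next
  case (Cons e es)
  define S where "S = W \<union> set (e # es)"
  define target where "target = marginal_nodes p c base (e # es) S \<union> base_subexprs p c base S"
  have into_target: "marginal_nodes p c base es S' \<union> base_subexprs p c base S' \<subseteq> target" if "S' \<subseteq> S" for S'
    unfolding target_def by (intro Un_mono marginal_nodes_Cons_mono base_subexprs_mono that)
  have "card (insert e W) = Suc (card W)"
    using Cons.prems(2,3) by auto
  have IH_W: "subexprs (marginal_expr p c base es W) \<subseteq> target"
    if "p - card W \<le> c + length es"
    by (rule subset_trans[OF Cons.IH into_target]) (use Cons.prems that in \<open>auto simp: S_def\<close>)
  have IH_eW: "subexprs (marginal_expr p c base es (insert e W)) \<subseteq> target"
    if "\<not> p \<le> card W"
    by (rule subset_trans[OF Cons.IH into_target])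
      (use Cons.prems that \<open>card (insert e W) = _\<close> in \<open>auto simp: S_def\<close>)
  have self: "marginal_expr p c base (e # es) W \<in> target"
    if "\<not> p \<le> card W" "p - card W \<le> c + length es"
    using that unfolding target_def marginal_nodes_def S_def
    by (intro UnI1 CollectI exI[of _ 0] exI[of _ W]) auto
  have "subexprs (marginal_expr p c base (e # es) W) \<subseteq> target"
    using IH_W IH_eW self subexprs_refl
    by (cases "p \<le> card W"; cases "p - card W \<le> c + length es") simp_all
  then show ?case
    unfolding target_def S_def .
qed

definition level_nodes :: "nat \<Rightarrow> nat \<Rightarrow> nat \<Rightarrow> nat \<Rightarrow> nat set \<Rightarrow> expr set" where
  "level_nodes n p L l D =
     marginal_nodes p (n - card (block_union n (Suc l) (parent_blocks D)))
       (trace_expr n p L (L - Suc l) (parent_blocks D)) (new_points n l D)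
       (block_union n (Suc l) (parent_blocks D))"

definition trace_nodes :: "nat \<Rightarrow> nat \<Rightarrow> nat \<Rightarrow> nat \<Rightarrow> expr set" where
  "trace_nodes n p q L = EF ` subsets n p \<union>
     (\<Union>l<L. \<Union>D\<in>{D. valid_blocks n l D \<and> card D \<le> q}. level_nodes n p L l D)"

lemma card_parent_blocks_le: "finite D \<Longrightarrow> card (parent_blocks D) \<le> card D"
  unfolding parent_blocks_def by (rule card_image_le)

lemma subexprs_trace_expr:
  assumes "n \<le> 2 ^ L"
  shows "r \<le> L \<Longrightarrow> valid_blocks n (L - r) D \<Longrightarrow> card D \<le> q \<Longrightarrow> W \<subseteq> block_union n (L - r) D \<Longrightarrow>
    card W \<le> p \<Longrightarrow> p - card W \<le> n - card (block_union n (L - r) D) \<Longrightarrow>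
    subexprs (trace_expr n p L r D W) \<subseteq> trace_nodes n p q L"
proof (induction r arbitrary: D W)
  case 0
  then have "W \<in> subsets n p"
    using block_union_top[OF assms] unfolding subsets_def by auto
  then show ?case
    unfolding trace_nodes_def by simp
next
  case (Suc r)
  define l where "l = L - Suc r"
  have L_minus_r: "L - r = Suc l" "L - Suc l = r" "l < L"
    using Suc.prems(1) unfolding l_def by auto
  define R0 where "R0 = block_union n (Suc l) (parent_blocks D)"
  define es where "es = new_points n l D"
  have valid: "valid_blocks n l D"
    using Suc.prems(2) unfolding l_def .
  then have "finite D"
    using finite_subset[OF valid_blocks_subset[OF valid]] by simp
  then have "card (parent_blocks D) \<le> q"
    using card_parent_blocks_le[of D] Suc.prems(3) by simp
  have W_es: "W \<union> set es \<subseteq> R0"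
    using Suc.prems(4) set_new_points block_union_subset_parent unfolding R0_def es_def l_def by blast
  let ?base = "trace_expr n p L r (parent_blocks D)"
  have "subexprs (trace_expr n p L (Suc r) D W) \<subseteq>
      marginal_nodes p (n - card R0) ?base es (W \<union> set es) \<union> base_subexprs p (n - card R0) ?base (W \<union> set es)"
    unfolding trace_expr.simps L_minus_r(1) l_def[symmetric] R0_def[symmetric] es_def[symmetric]
    using set_new_points[of n l D] Suc.prems length_new_points[of n l D] card_block_union_le[of n "Suc l"]
      card_mono[OF finite_block_union block_union_subset_parent] finite_subset[OF Suc.prems(4)]
    by (intro subexprs_marginal_expr) (auto simp: es_def R0_def l_def)
  also have "\<dots> \<subseteq> level_nodes n p L l D \<union> base_subexprs p (n - card R0) ?base R0"
    unfolding level_nodes_def L_minus_r(2) R0_def[symmetric] es_def[symmetric]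
    by (intro Un_mono marginal_nodes_mono base_subexprs_mono W_es)
  also have "\<dots> \<subseteq> trace_nodes n p q L"
  proof (intro Un_least)
    show "level_nodes n p L l D \<subseteq> trace_nodes n p q L"
      using valid Suc.prems(3) L_minus_r(3) unfolding trace_nodes_def by blast
    show "base_subexprs p (n - card R0) ?base R0 \<subseteq> trace_nodes n p q L"
      unfolding base_subexprs_def
      using Suc.IH Suc.prems(1) valid_blocks_parent[OF valid] \<open>card (parent_blocks D) \<le> q\<close>
      unfolding R0_def L_minus_r(1) by (intro UN_least) auto
  qed
  finally show ?case .
qed

lemma card_block_union: "finite D \<Longrightarrow> card (block_union n l D) \<le> card D * 2 ^ l"
proof -
  assume "finite D"
  have "block_union n l D \<subseteq> (\<Union>d\<in>D. {d * 2 ^ l + 1 .. d * 2 ^ l + 2 ^ l})"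
  proof
    fix x assume x: "x \<in> block_union n l D"
    define d where "d = (x - 1) div 2 ^ l"
    have "d * 2 ^ l + (x - 1) mod 2 ^ l = x - 1" "(x - 1) mod 2 ^ l < 2 ^ l"
      unfolding d_def by (rule div_mult_mod_eq) simp
    then have "d * 2 ^ l \<le> x - 1" "x - 1 < d * 2 ^ l + 2 ^ l"
      by linarith+
    moreover have "d \<in> D" "1 \<le> x"
      using x unfolding block_union_def d_def by auto
    ultimately show "x \<in> (\<Union>d\<in>D. {d * 2 ^ l + 1 .. d * 2 ^ l + 2 ^ l})"
      by (intro UN_I[of d]) auto
  qed
  then have "card (block_union n l D) \<le> card (\<Union>d\<in>D. {d * 2 ^ l + 1 .. d * 2 ^ l + 2 ^ l})"
    using \<open>finite D\<close> by (intro card_mono) auto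
  also have "\<dots> \<le> (\<Sum>d\<in>D. card {d * 2 ^ l + 1 .. d * 2 ^ l + 2 ^ l})"
    by (rule card_UN_le[OF \<open>finite D\<close>])
  finally show ?thesis
    by simp
qed

lemma card_subsets_card_less:
  "finite A \<Longrightarrow> card {W. W \<subseteq> A \<and> card W < p} \<le> (\<Sum>j<p. card A choose j)"
proof -
  assume "finite A"
  have "{W. W \<subseteq> A \<and> card W < p} = (\<Union>j<p. {W. W \<subseteq> A \<and> card W = j})"
    by auto
  then have "card {W. W \<subseteq> A \<and> card W < p} \<le> (\<Sum>j<p. card {W. W \<subseteq> A \<and> card W = j})"
    using card_UN_le[of "{..<p}" "\<lambda>j. {W. W \<subseteq> A \<and> card W = j}"] by simp
  then show ?thesis
    using n_subsets[OF \<open>finite A\<close>] by simp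
qed

lemma marginal_nodes_subset_image:
  "marginal_nodes p c base es S \<subseteq>
    (\<lambda>(i, W). marginal_expr p c base (drop i es) W) ` ({..length es} \<times> {W. W \<subseteq> S \<and> card W < p})"
  unfolding marginal_nodes_def by auto

lemma finite_marginal_nodes: "finite S \<Longrightarrow> finite (marginal_nodes p c base es S)"
  by (rule finite_subset[OF marginal_nodes_subset_image]) simp

lemma card_marginal_nodes:
  assumes "finite S"
  shows "card (marginal_nodes p c base es S) \<le> (length es + 1) * (\<Sum>j<p. card S choose j)"
proof -
  have "card (marginal_nodes p c base es S) \<le> card ({..length es} \<times> {W. W \<subseteq> S \<and> card W < p})"
    using assms by (intro card_mono[OF _ marginal_nodes_subset_image, THEN order_trans] card_image_le) auto
  also have "\<dots> = (length es + 1) * card {W. W \<subseteq> S \<and> card W < p}"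
    by (simp add: card_cartesian_product)
  also have "\<dots> \<le> (length es + 1) * (\<Sum>j<p. card S choose j)"
    by (intro mult_left_mono card_subsets_card_less assms) simp
  finally show ?thesis .
qed

lemma card_level_nodes:
  assumes "valid_blocks n l D"
  shows "card (level_nodes n p L l D) \<le> (2 * card D * 2 ^ l + 1) * (\<Sum>j<p. (2 * card D * 2 ^ l) choose j)"
proof -
  define R where "R = block_union n (Suc l) (parent_blocks D)"
  have "finite D"
    using finite_subset[OF valid_blocks_subset[OF assms]] by simp
  then have "card R \<le> card (parent_blocks D) * 2 ^ Suc l"
    unfolding R_def by (intro card_block_union) (simp add: parent_blocks_def)
  also have "\<dots> \<le> card D * 2 ^ Suc l"
    using card_parent_blocks_le[OF \<open>finite D\<close>] by simp
  finally have card_R: "card R \<le> 2 * card D * 2 ^ l"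
    by simp
  have "card (level_nodes n p L l D) \<le> (length (new_points n l D) + 1) * (\<Sum>j<p. card R choose j)"
    unfolding level_nodes_def R_def[symmetric] by (rule card_marginal_nodes) (simp add: R_def)
  also have "\<dots> \<le> (2 * card D * 2 ^ l + 1) * (\<Sum>j<p. (2 * card D * 2 ^ l) choose j)"
    using card_R unfolding R_def
    by (intro mult_mono add_mono sum_mono binomial_right_mono) (simp_all add: length_new_points)
  finally show ?thesis .
qed

lemma card_blocks:
  assumes "0 < s" "s \<le> n"
  shows "finite {d. d * s < n}" "card {d. d * s < n} * s \<le> 2 * n"
proof -
  have blocks: "{d. d * s < n} \<subseteq> {..<(n - 1) div s + 1}"
    using assms by (auto simp: less_eq_div_iff_mult_less_eq less_Suc_eq_le)
  then show "finite {d. d * s < n}"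
    using finite_subset by blast
  have "card {d. d * s < n} * s \<le> ((n - 1) div s + 1) * s"
    by (intro mult_right_mono) (use card_mono[OF _ blocks] in auto)
  also have "\<dots> \<le> (n - 1) + s"
    by (simp add: add_mult_distrib div_times_less_eq_dividend)
  finally show "card {d. d * s < n} * s \<le> 2 * n"
    using assms by simp
qed

lemma valid_blocks_card_le:
  "{D. valid_blocks n l D \<and> card D \<le> q} = (\<Union>i<q. {D. D \<subseteq> {d. d * 2 ^ l < n} \<and> card D = Suc i})"
proof (intro equalityI subsetI)
  fix D assume "D \<in> {D. valid_blocks n l D \<and> card D \<le> q}"
  then have D: "valid_blocks n l D" "card D \<le> q"
    by auto
  then have "card D \<noteq> 0"
    using finite_subset[OF valid_blocks_subset[OF D(1)]] unfolding valid_blocks_def by simp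
  then show "D \<in> (\<Union>i<q. {D. D \<subseteq> {d. d * 2 ^ l < n} \<and> card D = Suc i})"
    using D unfolding valid_blocks_def by (cases "card D") auto
next
  fix D assume "D \<in> (\<Union>i<q. {D. D \<subseteq> {d. d * 2 ^ l < n} \<and> card D = Suc i})"
  then show "D \<in> {D. valid_blocks n l D \<and> card D \<le> q}"
    unfolding valid_blocks_def by auto
qed

lemma sum_power_div_fact_le_exp:
  fixes x :: real
  assumes "0 \<le> x"
  shows "(\<Sum>j<N. x ^ j / fact j) \<le> exp x"
proof -
  have "summable (\<lambda>j. x ^ j / fact j)"
    using summable_exp[of x] by (simp add: divide_inverse mult.commute)
  then have "(\<Sum>j<N. x ^ j / fact j) \<le> (\<Sum>j. x ^ j / fact j)"
    by (rule sum_le_suminf) (use assms in auto)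
  also have "\<dots> = exp x"
    unfolding exp_def by (simp add: divide_inverse mult.commute)
  finally show ?thesis .
qed

lemma power_blocks_points_le:
  fixes m s n k j p q :: nat
  assumes "1 \<le> s" "s \<le> n" "m * s \<le> 2 * n" "k \<le> q" "j < p"
  shows "m ^ k * s ^ (j + 1) \<le> 2 ^ k * (n ^ p + n ^ q)"
proof -
  have "1 \<le> n"
    using assms by simp
  have ms: "m ^ k * s ^ k \<le> 2 ^ k * n ^ k"
    using power_mono[OF assms(3), of k] by (simp add: power_mult_distrib)
  show ?thesis
  proof (cases "j + 1 \<le> k")
    case True
    have "m ^ k * s ^ (j + 1) \<le> m ^ k * s ^ k" using power_increasing[OF True, of s] assms(1) by simp
    also have "\<dots> \<le> 2 ^ k * n ^ k" by (rule ms)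
    also have "\<dots> \<le> 2 ^ k * n ^ q" using power_increasing[OF assms(4) \<open>1 \<le> n\<close>] by simp
    also have "\<dots> \<le> 2 ^ k * (n ^ p + n ^ q)" by simp
    finally show ?thesis .
  next
    case False
    then have e: "j + 1 = k + (j + 1 - k)" by simp
    have "m ^ k * s ^ (j + 1) = (m ^ k * s ^ k) * s ^ (j + 1 - k)" by (subst e) (simp add: power_add)
    also have "\<dots> \<le> (2 ^ k * n ^ k) * n ^ (j + 1 - k)"
      by (rule mult_mono[OF ms power_mono]) (use assms in auto)
    also have "\<dots> = 2 ^ k * n ^ (j + 1)" by (subst (2) e) (simp add: power_add)
    also have "\<dots> \<le> 2 ^ k * n ^ p" using power_increasing[of "j+1" p n] assms(5) \<open>1 \<le> n\<close> by simp
    also have "\<dots> \<le> 2 ^ k * (n ^ p + n ^ q)" by simp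
    finally show ?thesis .
  qed
qed

lemma binomial_le_power_div_fact: "real (a choose b) \<le> real a ^ b / fact b"
proof -
  have "real (a choose b) * fact b \<le> real a ^ b"
    using of_nat_mono[OF binomial_fact_pow[of a b]] by simp
  then show ?thesis
    by (simp add: field_simps)
qed

lemma level_term_le:
  fixes m s n k j p q :: nat
  assumes "1 \<le> s" "s \<le> n" "m * s \<le> 2 * n" "1 \<le> k" "k \<le> q" "j < p"
  shows "real (m choose k) * real (2 * k * s + 1) * real ((2 * k * s) choose j)
    \<le> 3 * k * 2 ^ k * (2 * k) ^ j / (fact k * fact j) * (real n ^ p + real n ^ q)"
proof -
  have "1 \<le> k * s"
    using assms by simp
  then have a: "real (2 * k * s + 1) \<le> 3 * k * s"
    by linarith
  have "real (m choose k) * real (2 * k * s + 1) * real ((2 * k * s) choose j)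
      \<le> (real m ^ k / fact k) * (3 * k * s) * (real (2 * k * s) ^ j / fact j)"
    by (intro mult_mono binomial_le_power_div_fact a) auto
  also have "\<dots> = 3 * k * (2 * k) ^ j / (fact k * fact j) * (real m ^ k * real s ^ (j + 1))"
    by (simp add: power_mult_distrib field_simps)
  also have "\<dots> \<le> 3 * k * (2 * k) ^ j / (fact k * fact j) * (2 ^ k * (real n ^ p + real n ^ q))"
  proof (rule mult_left_mono)
    have "real (m ^ k * s ^ (j + 1)) \<le> real (2 ^ k * (n ^ p + n ^ q))"
      using power_blocks_points_le[OF assms(1,2,3,5,6)] by linarith
    then show "real m ^ k * real s ^ (j + 1) \<le> 2 ^ k * (real n ^ p + real n ^ q)" by simp
  qed simp
  also have "\<dots> = 3 * k * 2 ^ k * (2 * k) ^ j / (fact k * fact j) * (real n ^ p + real n ^ q)"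
    by simp
  finally show ?thesis .
qed

lemma level_sum_term_le:
  fixes m s n k p q :: nat
  assumes "1 \<le> s" "s \<le> n" "m * s \<le> 2 * n" "1 \<le> k" "k \<le> q"
  shows "real (m choose k) * (real (2 * k * s + 1) * (\<Sum>j<p. real ((2 * k * s) choose j)))
    \<le> 3 * real k * (2 * exp 2) ^ k / fact k * (real n ^ p + real n ^ q)"
proof -
  define N where "N = real n ^ p + real n ^ q"
  have "real (m choose k) * (real (2 * k * s + 1) * (\<Sum>j<p. real ((2 * k * s) choose j)))
      = (\<Sum>j<p. real (m choose k) * real (2 * k * s + 1) * real ((2 * k * s) choose j))"
    by (simp add: sum_distrib_left mult.assoc)
  also have "\<dots> \<le> (\<Sum>j<p. 3 * k * 2 ^ k * (2 * k) ^ j / (fact k * fact j) * N)"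
    unfolding N_def by (intro sum_mono level_term_le) (use assms in auto)
  also have "\<dots> = 3 * k * 2 ^ k / fact k * (\<Sum>j<p. (2 * real k) ^ j / fact j) * N"
    by (simp add: sum_distrib_left sum_distrib_right field_simps)
  also have "\<dots> \<le> 3 * k * 2 ^ k / fact k * exp (2 * real k) * N"
    unfolding N_def by (intro mult_right_mono mult_left_mono sum_power_div_fact_le_exp) auto
  also have "\<dots> = 3 * real k * (2 * exp 2) ^ k / fact k * N"
    by (simp add: power_mult_distrib exp_of_nat_mult[symmetric] mult.commute)
  finally show ?thesis
    unfolding N_def .
qed

definition level_constant :: real where
  "level_constant = 6 * exp 2 * exp (2 * exp 2)"

lemma sum_level_constant_le:
  "(\<Sum>i<q. 3 * real (Suc i) * (2 * exp 2) ^ Suc i / fact (Suc i)) \<le> level_constant"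
proof -
  define a :: real where "a = 2 * exp 2"
  have "(\<Sum>i<q. 3 * real (Suc i) * a ^ Suc i / fact (Suc i)) = 3 * a * (\<Sum>i<q. a ^ i / fact i)"
    by (simp add: sum_distrib_left field_simps del: of_nat_Suc)
  also have "\<dots> \<le> 3 * a * exp a"
    by (intro mult_left_mono sum_power_div_fact_le_exp) (auto simp: a_def)
  finally show ?thesis
    unfolding level_constant_def a_def by simp
qed

lemma level_sum_le:
  fixes m s n p q :: nat
  assumes "1 \<le> s" "s \<le> n" "m * s \<le> 2 * n"
  shows "(\<Sum>i<q. real (m choose Suc i) *
      (real (2 * Suc i * s + 1) * (\<Sum>j<p. real ((2 * Suc i * s) choose j))))
    \<le> level_constant * (real n ^ p + real n ^ q)"
proof -
  have "(\<Sum>i<q. real (m choose Suc i) *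
      (real (2 * Suc i * s + 1) * (\<Sum>j<p. real ((2 * Suc i * s) choose j))))
    \<le> (\<Sum>i<q. 3 * real (Suc i) * (2 * exp 2) ^ Suc i / fact (Suc i) * (real n ^ p + real n ^ q))"
    by (intro sum_mono level_sum_term_le) (use assms in auto)
  also have "\<dots> \<le> level_constant * (real n ^ p + real n ^ q)"
    unfolding sum_distrib_right[symmetric] by (intro mult_right_mono sum_level_constant_le) auto
  finally show ?thesis .
qed

lemma sum_card_level_nodes:
  assumes "2 ^ l < n"
  shows "real (\<Sum>D\<in>{D. valid_blocks n l D \<and> card D \<le> q}. card (level_nodes n p L l D))
    \<le> level_constant * (real n ^ p + real n ^ q)"
proof -
  define s :: nat where "s = 2 ^ l"
  define M where "M = {d. d * s < n}"
  define A where "A = (\<lambda>i. {D. D \<subseteq> M \<and> card D = Suc i})"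
  define B where "B = (\<lambda>k. (2 * k * s + 1) * (\<Sum>j<p. (2 * k * s) choose j))"
  have "1 \<le> s" "s \<le> n"
    using assms unfolding s_def by auto
  then have "finite M" and card_M: "card M * s \<le> 2 * n"
    using card_blocks[of s n] unfolding M_def by auto
  then have "finite (A i)" for i
    unfolding A_def by (auto intro: finite_subset[of _ "Pow M"])
  then have "(\<Sum>D\<in>{D. valid_blocks n l D \<and> card D \<le> q}. card (level_nodes n p L l D))
      = (\<Sum>i<q. \<Sum>D\<in>A i. card (level_nodes n p L l D))"
    unfolding valid_blocks_card_le s_def[symmetric] M_def[symmetric] A_def[symmetric]
    by (intro sum.UNION_disjoint) (auto simp: A_def)
  also have "\<dots> \<le> (\<Sum>i<q. \<Sum>D\<in>A i. B (Suc i))"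
  proof (intro sum_mono)
    fix i D assume "D \<in> A i"
    then have "valid_blocks n l D" "card D = Suc i"
      unfolding A_def M_def s_def valid_blocks_def by auto
    then show "card (level_nodes n p L l D) \<le> B (Suc i)"
      using card_level_nodes unfolding B_def s_def by metis
  qed
  also have "\<dots> = (\<Sum>i<q. (card M choose Suc i) * B (Suc i))"
    unfolding A_def using n_subsets[OF \<open>finite M\<close>] by simp
  finally have "real (\<Sum>D\<in>{D. valid_blocks n l D \<and> card D \<le> q}. card (level_nodes n p L l D))
      \<le> real (\<Sum>i<q. (card M choose Suc i) * B (Suc i))"
    by (simp only: of_nat_le_iff)
  also have "\<dots> = (\<Sum>i<q. real (card M choose Suc i) *
           (real (2 * Suc i * s + 1) * (\<Sum>j<p. real ((2 * Suc i * s) choose j))))"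
    unfolding B_def by (simp only: of_nat_sum of_nat_mult)
  also have "\<dots> \<le> level_constant * (real n ^ p + real n ^ q)"
    by (rule level_sum_le[OF \<open>1 \<le> s\<close> \<open>s \<le> n\<close> card_M])
  finally show ?thesis .
qed

lemma finite_valid_blocks: "finite {D. valid_blocks n l D \<and> card D \<le> q}"
  by (rule finite_subset[of _ "Pow {..<n}"]) (auto dest: valid_blocks_subset)

lemma finite_trace_nodes: "finite (trace_nodes n p q L)"
  unfolding trace_nodes_def level_nodes_def by (simp add: finite_marginal_nodes finite_valid_blocks)

lemma card_subsets_le_power: "real (card (subsets n p)) \<le> real n ^ p"
  unfolding card_subsets by (metis binomial_le_pow binomial_eq_0 not_le of_nat_le_iff of_nat_power zero_le)

lemma card_trace_nodes:
  assumes "\<And>l. l < L \<Longrightarrow> 2 ^ l < n"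
  shows "real (card (trace_nodes n p q L)) \<le> real n ^ p + real L * level_constant * (real n ^ p + real n ^ q)"
proof -
  let ?levels = "\<lambda>l. {D. valid_blocks n l D \<and> card D \<le> q}"
  have "card (trace_nodes n p q L) \<le>
      card (subsets n p) + (\<Sum>l<L. \<Sum>D\<in>?levels l. card (level_nodes n p L l D))"
    unfolding trace_nodes_def
    by (intro card_Un_le[THEN order_trans] add_mono card_image_le card_UN_le[THEN order_trans]
        sum_mono) (simp_all add: finite_valid_blocks)
  then have "real (card (trace_nodes n p q L)) \<le>
      real (card (subsets n p) + (\<Sum>l<L. \<Sum>D\<in>?levels l. card (level_nodes n p L l D)))"
    by (simp only: of_nat_le_iff)
  also have "\<dots> =
      real (card (subsets n p)) + (\<Sum>l<L. real (\<Sum>D\<in>?levels l. card (level_nodes n p L l D)))"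
    by (subst of_nat_add, subst of_nat_sum) (rule refl)
  also have "\<dots> \<le> real n ^ p + (\<Sum>l<L. level_constant * (real n ^ p + real n ^ q))"
    using assms by (intro add_mono card_subsets_le_power sum_mono sum_card_level_nodes) simp
  finally show ?thesis
    by (simp add: mult.assoc)
qed

lemma subexprs_sum_expr:
  "ys \<noteq> [] \<Longrightarrow> subexprs (sum_expr h ys) \<subseteq>
    (\<lambda>i. sum_expr h (drop i ys)) ` {..<length ys} \<union> (\<Union>y\<in>set ys. subexprs (h y))"
proof (induction h ys rule: sum_expr.induct)
  case (3 h y z ys)
  have "sum_expr h (y # z # ys) \<in> (\<lambda>i. sum_expr h (drop i (y # z # ys))) ` {..<length (y # z # ys)}"
    by (rule image_eqI[of _ _ 0]) auto
  moreover have "(\<lambda>i. sum_expr h (drop i (z # ys))) ` {..<length (z # ys)} \<subseteq>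
      (\<lambda>i. sum_expr h (drop i (y # z # ys))) ` {..<length (y # z # ys)}"
    by (rule image_subsetI, rule image_eqI[of _ _ "Suc _"]) auto
  ultimately show ?case
    using 3 by (simp only: sum_expr.simps subexprs.simps list.set UN_insert) blast
qed auto

lemma sum_expr_cases: "ys \<noteq> [] \<Longrightarrow> sum_expr h ys = h (hd ys) \<or> (\<exists>a b. sum_expr h ys = EAdd a b)"
  by (induction h ys rule: sum_expr.induct) auto

lemma subexprs_disjoint_sum_expr:
  assumes "n \<le> 2 ^ L" "Y \<in> subsets n q" "p + q \<le> n" "0 < q"
  shows "subexprs (disjoint_sum_expr n p L Y) \<subseteq> insert (disjoint_sum_expr n p L Y) (trace_nodes n p q L \<union> {EG Y})"
proof -
  have Y: "Y \<subseteq> {1..n}" "card Y = q" "Y \<noteq> {}"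
    using assms(2,4) unfolding subsets_def by auto
  then have "card (leaf_blocks Y) \<le> q"
    unfolding leaf_blocks_def using card_image_le[of Y "\<lambda>x. x - 1"] finite_subset[OF Y(1)] by simp
  then have "subexprs (trace_expr n p L L (leaf_blocks Y) {}) \<subseteq> trace_nodes n p q L"
    using subexprs_trace_expr[OF assms(1), of L "leaf_blocks Y" q "{}" p] assms(3)
      valid_blocks_leaf_blocks[OF Y(1,3)] block_union_leaf_blocks[OF Y(1)] Y(2) by simp
  then show ?thesis
    unfolding disjoint_sum_expr_def by auto
qed

lemma subexprs_pairs_expr:
  assumes "n \<le> 2 ^ L" "p + q \<le> n" "0 < q" "set ys = subsets n q"
  shows "subexprs (pairs_expr n p L ys) \<subseteq> trace_nodes n p q L \<union>
    (\<lambda>i. pairs_expr n p L (drop i ys)) ` {..<length ys} \<union> disjoint_sum_expr n p L ` set ys \<union> EG ` set ys"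
proof -
  have "ys \<noteq> []"
    using subsets_nonempty[of q n] assms by auto
  then show ?thesis
    using subexprs_sum_expr[of ys "disjoint_sum_expr n p L"]
      subexprs_disjoint_sum_expr[OF assms(1) _ assms(2,3)] assms(4)
    unfolding pairs_expr_def by blast
qed

lemma pairs_expr_inputs:
  assumes "n \<le> 2 ^ L" "p + q \<le> n" "0 < q" "set ys = subsets n q"
  shows "EF X \<in> subexprs (pairs_expr n p L ys) \<Longrightarrow> X \<in> subsets n p"
    and "EG Y \<in> subexprs (pairs_expr n p L ys) \<Longrightarrow> Y \<in> subsets n q"
proof -
  have inner: "\<exists>a b. t = EAdd a b \<or> t = EMul a b"
    if t: "t \<in> (\<lambda>i. pairs_expr n p L (drop i ys)) ` {..<length ys} \<union> disjoint_sum_expr n p L ` set ys" for t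
  proof (cases "t \<in> disjoint_sum_expr n p L ` set ys")
    case False
    then obtain i where "i < length ys" "t = pairs_expr n p L (drop i ys)"
      using t by blast
    then show ?thesis
      using sum_expr_cases[of "drop i ys" "disjoint_sum_expr n p L"]
      unfolding pairs_expr_def disjoint_sum_expr_def by auto
  qed (auto simp: disjoint_sum_expr_def)
  have "t \<in> EF ` subsets n p \<or> (\<exists>a b. t = EAdd a b)" if "t \<in> trace_nodes n p q L" for t
    using that unfolding trace_nodes_def level_nodes_def marginal_nodes_def by blast
  then show "EF X \<in> subexprs (pairs_expr n p L ys) \<Longrightarrow> X \<in> subsets n p"
    and "EG Y \<in> subexprs (pairs_expr n p L ys) \<Longrightarrow> Y \<in> subsets n q"
    using subexprs_pairs_expr[OF assms] inner assms(4) by blast+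
qed

lemma card_subexprs_pairs_expr:
  assumes "n \<le> 2 ^ L" "p + q \<le> n" "0 < q" "distinct ys" "set ys = subsets n q"
  shows "real (card (subexprs (pairs_expr n p L ys))) \<le> real (card (trace_nodes n p q L)) + 3 * real n ^ q"
proof -
  let ?suffixes = "(\<lambda>i. pairs_expr n p L (drop i ys)) ` {..<length ys}"
  have "card (subexprs (pairs_expr n p L ys)) \<le>
      card (trace_nodes n p q L \<union> ?suffixes \<union> disjoint_sum_expr n p L ` set ys \<union> EG ` set ys)"
    by (intro card_mono subexprs_pairs_expr assms) (simp add: finite_trace_nodes)
  also have "\<dots> \<le> card (trace_nodes n p q L) + card ?suffixes +
      card (disjoint_sum_expr n p L ` set ys) + card (EG ` set ys)"
    by (meson add_le_mono card_Un_le order_trans order_refl)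
  also have "\<dots> \<le> card (trace_nodes n p q L) + length ys + length ys + length ys"
    by (intro add_mono card_image_le[THEN order_trans] card_length) simp_all
  also have "length ys = card (subsets n q)"
    using assms(4,5) distinct_card by fastforce
  finally show ?thesis
    using card_subsets_le_power[of n q] by linarith
qed

lemma disjoint_pairs_circuit:
  assumes "n \<le> 2 ^ L" "\<And>l. l < L \<Longrightarrow> 2 ^ l < n" "p + q \<le> n" "0 < q"
  obtains C where "circuit_wf n p q C"
    "real (length C) \<le> (3 + real L * level_constant) * (real n ^ p + real n ^ q)"
    "\<And>(f :: nat set \<Rightarrow> 'a::semiring) g. circuit_value f g C = nsum (\<lambda>(X, Y). f X * g Y)
        {(X, Y). X \<in> subsets n p \<and> Y \<in> subsets n q \<and> X \<inter> Y = {}}"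
proof -
  obtain ys where ys: "distinct ys" "set ys = subsets n q"
    using finite_distinct_list[OF finite_subsets] by blast
  obtain C where C: "circuit_wf n p q C" "length C = card (subexprs (pairs_expr n p L ys))"
    "\<And>(f :: nat set \<Rightarrow> 'a::semiring) g. circuit_value f g C = eval f g (pairs_expr n p L ys)"
    using circuit_of_expr pairs_expr_inputs[OF assms(1,3,4) ys(2)] by metis
  have "real (length C) \<le> real n ^ p + real L * level_constant * (real n ^ p + real n ^ q) + 3 * real n ^ q"
    using C(2) card_subexprs_pairs_expr[OF assms(1,3,4) ys] card_trace_nodes[of L n p q, OF assms(2)] by linarith
  also have "\<dots> \<le> (3 + real L * level_constant) * (real n ^ p + real n ^ q)"
    by (simp add: algebra_simps)
  finally have "real (length C) \<le> (3 + real L * level_constant) * (real n ^ p + real n ^ q)" .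
  moreover have "circuit_value f g C = nsum (\<lambda>(X, Y). f X * g Y)
      {(X, Y). X \<in> subsets n p \<and> Y \<in> subsets n q \<and> X \<inter> Y = {}}" for f g :: "nat set \<Rightarrow> 'a"
    using C(3) eval_pairs_expr[OF assms(1,3,4) ys] by simp
  ultimately show thesis
    using that C(1) by blast
qed

lemma dyadic_levels:
  assumes "2 \<le> n"
  obtains L where "n \<le> 2 ^ L" "\<And>l. l < L \<Longrightarrow> 2 ^ l < n" "real L \<le> 2 * log 2 (real n)"
proof -
  define L where "L = (LEAST L. n \<le> 2 ^ L)"
  have "n \<le> 2 ^ L"
    unfolding L_def by (rule LeastI[of _ n]) (simp add: less_imp_le)
  moreover have less: "2 ^ l < n" if "l < L" for l
    using not_less_Least[of l "\<lambda>L. n \<le> 2 ^ L"] that unfolding L_def by simp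
  moreover have "real L \<le> 2 * log 2 (real n)"
  proof -
    have "0 < L"
      using \<open>n \<le> 2 ^ L\<close> assms by (cases L) auto
    then have "real (2 ^ (L - 1)) < real n"
      using less[of "L - 1"] by simp
    then have "real (L - 1) < log 2 (real n)"
      using assms by (simp add: less_log_iff powr_realpow)
    moreover have "1 \<le> log 2 (real n)"
      using assms by simp
    ultimately show ?thesis
      using \<open>0 < L\<close> by linarith
  qed
  ultimately show thesis
    using that by blast
qed

lemma level_constant_nonneg: "0 \<le> level_constant"
  unfolding level_constant_def by simp

theorem mainTheorem10:
  shows "\<exists>c::real. \<forall>n p q :: nat. 0 < p \<and> 0 < q \<and> p + q \<le> n \<longrightarrow>
    (\<exists>C. circuit_wf n p q C \<and>
         real (length C) \<le> c * (real n ^ p + real n ^ q) * ln (real n) \<and>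
         (\<forall>(f :: nat set \<Rightarrow> 'a::semiring) g.
            circuit_value f g C =
              nsum (\<lambda>(X, Y). f X * g Y)
                {(X, Y). X \<in> subsets n p \<and> Y \<in> subsets n q \<and> X \<inter> Y = {}}))"
proof (rule exI[of _ "(3 + 2 * level_constant) / ln 2"], intro allI impI)
  fix n p q :: nat
  assume npq: "0 < p \<and> 0 < q \<and> p + q \<le> n"
  then have "2 \<le> n"
    by simp
  then obtain L where L: "n \<le> 2 ^ L" "\<And>l. l < L \<Longrightarrow> 2 ^ l < n" "real L \<le> 2 * log 2 (real n)"
    using dyadic_levels by blast
  obtain C :: "gate list" where C: "circuit_wf n p q C"
    "real (length C) \<le> (3 + real L * level_constant) * (real n ^ p + real n ^ q)"
    "\<And>(f :: nat set \<Rightarrow> 'a) g. circuit_value f g C = nsum (\<lambda>(X, Y). f X * g Y)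
        {(X, Y). X \<in> subsets n p \<and> Y \<in> subsets n q \<and> X \<inter> Y = {}}"
    using disjoint_pairs_circuit[OF L(1,2)] npq by blast
  have "1 \<le> log 2 (real n)"
    using \<open>2 \<le> n\<close> by simp
  then have "3 + real L * level_constant \<le> (3 + 2 * level_constant) * log 2 (real n)"
    using L(3) mult_right_mono[OF L(3) level_constant_nonneg] by (simp add: algebra_simps)
  also have "\<dots> = (3 + 2 * level_constant) / ln 2 * ln (real n)"
    by (simp add: log_def)
  finally have "real (length C) \<le> (3 + 2 * level_constant) / ln 2 * (real n ^ p + real n ^ q) * ln (real n)"
    using C(2) mult_right_mono[of _ _ "real n ^ p + real n ^ q"] by (fastforce simp: mult_ac)
  then show "\<exists>C. circuit_wf n p q C \<and>
      real (length C) \<le> (3 + 2 * level_constant) / ln 2 * (real n ^ p + real n ^ q) * ln (real n) \<and>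
      (\<forall>(f :: nat set \<Rightarrow> 'a::semiring) g. circuit_value f g C = nsum (\<lambda>(X, Y). f X * g Y)
        {(X, Y). X \<in> subsets n p \<and> Y \<in> subsets n q \<and> X \<inter> Y = {}})"
    using C(1,3) by blast
qed
end
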